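(* Let $G^{c}$ be the graph obtained from the graph $G$ of the construction described in the context by additionally adding all edges $p_ip_{i'}$ for distinct $i,i'\in[t]$, and let $\ell=2|\mathcal{C}|+\frac{2n}{3}+1$. If $G^{c}$ has an acyclic matching of size at least $\ell$, then for some $q\in[t]$ the instance $(X,\mathcal{S}_q)$ of \textsc{Exact-3-Cover} is a Yes-instance.
   Context: Construction. Let $n=3c$ with $c\in\mathbb{N}$, $X=[n]$, and let $(X,\mathcal{S}_1),\dots,(X,\mathcal{S}_t)$ be instances of \textsc{Exact-3-Cover} (each $\mathcal{S}_i$ a collection of 3-element subsets of $X$, all $\mathcal{S}_i$ of the same size $m$ and pairwise distinct as collections). An instance $(X,\mathcal{S})$ is a Yes-instance if some subcollection of $\mathcal{S}$ covers every element of $X$ exactly once. Let $\mathcal{C}=\bigcup_{i\in[t]}\mathcal{S}_i=\{s_1,\dots,s_{|\mathcal{C}|}\}$ (distinct 3-sets). The graph $G$: a vertex set $X'=\{v_a:a\in X\}$; for each $s_j=\{a,b,c\}\in\mathcal{C}$ a set gadget $Q_j$ with vertices $u_{ja},u_{jb},u_{jc}$ (interface vertices), $u_j,w_j,u_j',w_j'$, where each of $u_j,w_j$ is adjacent to each of $u_{ja},u_{jb},u_{jc}$, and additionally $u_jw_j,u_ju_j',w_jw_j'$ are edges; for each $s_j\in\mathcal{C}$ and $d\in s_j$ the edge $u_{jd}v_d$; a vertex $p$ and vertices $P=\{p_1,\dots,p_t\}$ with edges $pp_i$ for all $i$; and for each $i\in[t]$ and each $s_j\in\mathcal{C}\setminus\mathcal{S}_i$,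 edges from $p_i$ to the three interface vertices of $Q_j$. There are no other edges. A matching $M$ is acyclic if the subgraph induced by the endpoints of its edges is a forest. *)

theory Defs
  imports Main
begin

text \<open>Vertices of the construction. Set gadgets are indexed by the 3-set
  s_j itself (instead of its index j in an enumeration of C).\<close>
datatype vtx =
    Xv nat
  | Iv "nat set" nat  \<comment> \<open>interface vertex u_{j a}\<close>
  | Uv "nat set"
  | Wv "nat set"
  | U'v "nat set"
  | W'v "nat set"
  | Pv
  | Piv nat

text \<open>Simple graphs are given by their edge set (a set of 2-element vertex sets).\<close>

definition matching :: "'a set set \<Rightarrow> 'a set set \<Rightarrow> bool" where
  "matching E M \<longleftrightarrow> M \<subseteq> E \<and> (\<forall>e\<in>M. \<forall>f\<in>M. e \<noteq> f \<longrightarrow> e \<inter> f = {})"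

definition induced_edges :: "'a set set \<Rightarrow> 'a set \<Rightarrow> 'a set set" where
  "induced_edges E S = {e \<in> E. e \<subseteq> S}"

definition has_cycle :: "'a set set \<Rightarrow> bool" where
  "has_cycle E \<longleftrightarrow> (\<exists>vs. length vs \<ge> 3 \<and> distinct vs \<and>
      (\<forall>i. Suc i < length vs \<longrightarrow> {vs ! i, vs ! Suc i} \<in> E) \<and> {last vs, hd vs} \<in> E)"

definition forest :: "'a set set \<Rightarrow> bool" where
  "forest E \<longleftrightarrow> \<not> has_cycle E"

definition acyclic_matching :: "'a set set \<Rightarrow> 'a set set \<Rightarrow> bool" where
  "acyclic_matching E M \<longleftrightarrow> matching E M \<and> forest (induced_edges E (\<Union>M))"

definition exact_cover_yes :: "nat set \<Rightarrow> nat set set \<Rightarrow> bool" where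
  "exact_cover_yes X S \<longleftrightarrow> (\<exists>T \<subseteq> S. \<forall>a\<in>X. \<exists>!s. s \<in> T \<and> a \<in> s)"

definition allsets :: "nat \<Rightarrow> (nat \<Rightarrow> nat set set) \<Rightarrow> nat set set" where
  "allsets t S = (\<Union>i\<in>{1..t}. S i)"

definition G_edges :: "nat \<Rightarrow> (nat \<Rightarrow> nat set set) \<Rightarrow> vtx set set" where
  "G_edges t S =
     {{Iv s a, Uv s} | s a. s \<in> allsets t S \<and> a \<in> s}
   \<union> {{Iv s a, Wv s} | s a. s \<in> allsets t S \<and> a \<in> s}
   \<union> {{Uv s, Wv s} | s. s \<in> allsets t S}
   \<union> {{Uv s, U'v s} | s. s \<in> allsets t S}
   \<union> {{Wv s, W'v s} | s. s \<in> allsets t S}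
   \<union> {{Iv s a, Xv a} | s a. s \<in> allsets t S \<and> a \<in> s}
   \<union> {{Pv, Piv i} | i. i \<in> {1..t}}
   \<union> {{Piv i, Iv s a} | i s a. i \<in> {1..t} \<and> s \<in> allsets t S - S i \<and> a \<in> s}"

definition Gc_edges :: "nat \<Rightarrow> (nat \<Rightarrow> nat set set) \<Rightarrow> vtx set set" where
  "Gc_edges t S = G_edges t S \<union> {{Piv i, Piv i'} | i i'. i \<in> {1..t} \<and> i' \<in> {1..t} \<and> i \<noteq> i'}"

end

theory Submission
  imports Defs
begin

text \<open>An acyclic matching never saturates all vertices of a cycle; nothing else about
  acyclicity is used. For a set s let g_s count the matched edges inside its gadget (each uses
  u_s or w_s), y_s the matched edges p_i u_{sa} (at most one, else two p's and u_{sa} form a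
  saturated triangle), and x_s the matched edges u_{sa} v_a; let k \<le> 1 count the matched edges
  inside the clique on p, p_1, ..., p_t. Saturated triangles u_{sa} u_s w_s and 4-cycles
  p_i u_{sa} u_s u_{sb} give 3 g_s + x_s + 3 y_s \<le> 6, and \<Sum> x_s \<le> n. Hence
  3|M| \<le> \<Sum> (3 g_s + x_s + 3 y_s) + 2 \<Sum> x_s + 3k \<le> 6|C| + 2n + 3, and the size bound forces
  equality throughout: k = 1, so some p_q is matched and no y_s survives; every v_a is matched
  into a gadget; and a gadget matched to X has its whole interface matched to X plus one edge
  at u_s or w_s. Such an s lies in S_q, for otherwise p_q u_{sa} u_s u_{sb} (or with w_s) is a
  saturated 4-cycle. So these sets form an exact cover taken from S_q.\<close>

lemma matching_edges_eq:
  assumes "matching E M" "e \<in> M" "f \<in> M" "v \<in> e" "v \<in> f"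
  shows "e = f"
  using assms unfolding matching_def by blast

lemma acyclic_matching_no_saturated_cycle:
  assumes "acyclic_matching E M" "length vs \<ge> 3" "distinct vs"
    and "\<forall>i. Suc i < length vs \<longrightarrow> {vs ! i, vs ! Suc i} \<in> E" "{last vs, hd vs} \<in> E"
    and "set vs \<subseteq> \<Union>M"
  shows False
proof -
  have sat: "x \<in> \<Union>M" if "x \<in> set vs" for x
    using assms(6) that by blast
  have "vs \<noteq> []" using assms(2) by auto
  have "{vs ! i, vs ! Suc i} \<subseteq> \<Union>M" if "Suc i < length vs" for i
    using sat[OF nth_mem, of i] sat[OF nth_mem, of "Suc i"] that by simp
  moreover have "{last vs, hd vs} \<subseteq> \<Union>M"
    using sat[OF last_in_set] sat[OF hd_in_set] \<open>vs \<noteq> []\<close> by simp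
  ultimately have "has_cycle (induced_edges E (\<Union>M))"
    unfolding has_cycle_def induced_edges_def using assms(2-5) by (intro exI[of _ vs]) auto
  then show False using assms(1) unfolding acyclic_matching_def forest_def by blast
qed

lemma acyclic_matching_no_saturated_triangle:
  assumes "acyclic_matching E M" "distinct [a, b, c]"
    and "{a, b} \<in> E" "{b, c} \<in> E" "{c, a} \<in> E" "{a, b, c} \<subseteq> \<Union>M"
  shows False
  by (rule acyclic_matching_no_saturated_cycle[OF assms(1), of "[a, b, c]"])
    (use assms in \<open>auto simp: less_Suc_eq\<close>)

lemma acyclic_matching_no_saturated_square:
  assumes "acyclic_matching E M" "distinct [a, b, c, d]"
    and "{a, b} \<in> E" "{b, c} \<in> E" "{c, d} \<in> E" "{d, a} \<in> E" "{a, b, c, d} \<subseteq> \<Union>M"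
  shows False
  by (rule acyclic_matching_no_saturated_cycle[OF assms(1), of "[a, b, c, d]"])
    (use assms in \<open>auto simp: less_Suc_eq\<close>)

lemma acyclic_matching_clique_saturated:
  assumes "acyclic_matching E M"
    and clique: "\<forall>x\<in>K. \<forall>y\<in>K. x \<noteq> y \<longrightarrow> {x, y} \<in> E"
    and "distinct [u, v, w]" "{u, v, w} \<subseteq> K" "{u, v, w} \<subseteq> \<Union>M"
  shows False
  using acyclic_matching_no_saturated_triangle[OF assms(1), of u v w] clique assms(3-) by auto

lemma card_acyclic_matching_clique_edges:
  assumes am: "acyclic_matching E M" and "finite M"
    and clique: "\<forall>x\<in>K. \<forall>y\<in>K. x \<noteq> y \<longrightarrow> {x, y} \<in> E"
    and two: "\<And>e. e \<in> E \<Longrightarrow> card e = 2"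
  shows "card {e \<in> M. e \<subseteq> K} \<le> 1"
proof -
  have match: "matching E M" and "M \<subseteq> E"
    using am by (auto simp: acyclic_matching_def matching_def)
  have "e = f" if e: "e \<in> M" "e \<subseteq> K" and f: "f \<in> M" "f \<subseteq> K" for e f
  proof (rule ccontr)
    assume "e \<noteq> f"
    have "card e = 2" "card f = 2" using two e(1) f(1) \<open>M \<subseteq> E\<close> by auto
    then obtain u v w where uv: "e = {u, v}" "u \<noteq> v" and "w \<in> f"
      by (metis card_2_iff insertI1)
    then have "w \<notin> e" using matching_edges_eq[OF match e(1) f(1)] \<open>e \<noteq> f\<close> by blast
    then have "distinct [u, v, w]" "{u, v, w} \<subseteq> K" "{u, v, w} \<subseteq> \<Union>M"
      using uv e f \<open>w \<in> f\<close> by auto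
    then show False by (rule acyclic_matching_clique_saturated[OF am clique])
  qed
  then show ?thesis using \<open>finite M\<close> by (auto simp: card_le_Suc0_iff_eq)
qed

definition p_clique :: "nat \<Rightarrow> vtx set" where
  "p_clique t = insert Pv (Piv ` {1..t})"

definition gadget :: "nat set \<Rightarrow> vtx set" where
  "gadget s = {Uv s, Wv s, U'v s, W'v s} \<union> Iv s ` s"

lemma card_Gc_edge: "e \<in> Gc_edges t S \<Longrightarrow> card e = 2"
  unfolding Gc_edges_def G_edges_def by (elim UnE CollectE exE conjE) auto

lemma Gc_gadget_edges:
  assumes "s \<in> allsets t S" "a \<in> s"
  shows "{Iv s a, Uv s} \<in> Gc_edges t S" "{Iv s a, Wv s} \<in> Gc_edges t S"
    "{Uv s, Wv s} \<in> Gc_edges t S"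
  using assms by (simp_all add: Gc_edges_def G_edges_def doubleton_eq_iff)

lemma Gc_selector_edge_iff:
  "{Piv i, Iv s a} \<in> Gc_edges t S \<longleftrightarrow> i \<in> {1..t} \<and> s \<in> allsets t S \<and> s \<notin> S i \<and> a \<in> s"
  by (simp add: Gc_edges_def G_edges_def doubleton_eq_iff)

lemma Gc_p_clique: "\<forall>u\<in>p_clique t. \<forall>v\<in>p_clique t. u \<noteq> v \<longrightarrow> {u, v} \<in> Gc_edges t S"
  unfolding Gc_edges_def G_edges_def p_clique_def by (auto simp: insert_commute)

lemma Gc_gadget_edge_hits_UW:
  "e \<in> Gc_edges t S \<Longrightarrow> e \<subseteq> gadget s \<Longrightarrow> Uv s \<in> e \<or> Wv s \<in> e"
  unfolding Gc_edges_def G_edges_def by (elim UnE CollectE exE conjE) (auto simp: gadget_def)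

lemma Gc_edge_cases:
  assumes "e \<in> Gc_edges t S"
  obtains s where "s \<in> allsets t S" "e \<subseteq> gadget s"
  | s a where "s \<in> allsets t S" "a \<in> s" "e = {Iv s a, Xv a}"
  | s i a where "s \<in> allsets t S" "a \<in> s" "e = {Piv i, Iv s a}"
  | "e \<subseteq> p_clique t"
  using assms unfolding Gc_edges_def G_edges_def
  by (elim UnE CollectE exE conjE) (auto simp: gadget_def p_clique_def)

locale Gc_acyclic_matching =
  fixes n t :: nat and S :: "nat \<Rightarrow> nat set set" and M :: "vtx set set"
  assumes sets_subset: "s \<in> allsets t S \<Longrightarrow> s \<subseteq> {1..n}"
    and card_sets: "s \<in> allsets t S \<Longrightarrow> card s = 3"
    and acyclic: "acyclic_matching (Gc_edges t S) M"
    and finite_M: "finite M"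
begin

lemma matching: "matching (Gc_edges t S) M"
  using acyclic by (simp add: acyclic_matching_def)

lemma M_subset: "M \<subseteq> Gc_edges t S"
  using matching by (simp add: matching_def)

lemma finite_allsets: "finite (allsets t S)"
proof (rule finite_subset)
  show "allsets t S \<subseteq> Pow {1..n}" using sets_subset by blast
qed simp

text \<open>In the notation above, g_s, x_s, y_s and k are the cardinalities of gadget_edges s,
  covered s, selector_edges s and clique_edges.\<close>

definition gadget_edges :: "nat set \<Rightarrow> vtx set set" where
  "gadget_edges s = {e \<in> M. e \<subseteq> gadget s}"

definition covered :: "nat set \<Rightarrow> nat set" where
  "covered s = {a \<in> s. {Iv s a, Xv a} \<in> M}"

definition selector_edges :: "nat set \<Rightarrow> vtx set set" where
  "selector_edges s = {e \<in> M. \<exists>i a. a \<in> s \<and> e = {Piv i, Iv s a}}"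

definition clique_edges :: "vtx set set" where
  "clique_edges = {e \<in> M. e \<subseteq> p_clique t}"

definition weight :: "nat set \<Rightarrow> nat" where
  "weight s = 3 * card (gadget_edges s) + card (covered s) + 3 * card (selector_edges s)"

lemma card_gadget_edges: "card (gadget_edges s) \<le> card ({Uv s, Wv s} \<inter> \<Union>M)"
proof -
  define f where "f e = (if Uv s \<in> e then Uv s else Wv s)" for e
  have hit: "f e \<in> e" "e \<in> M" if "e \<in> gadget_edges s" for e
  proof -
    show "e \<in> M" using that unfolding gadget_edges_def by blast
    then have "Uv s \<in> e \<or> Wv s \<in> e"
      using that M_subset Gc_gadget_edge_hits_UW unfolding gadget_edges_def by blast
    then show "f e \<in> e" unfolding f_def by auto
  qed
  have "inj_on f (gadget_edges s)"
  proof (rule inj_onI)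
    fix e e' assume e: "e \<in> gadget_edges s" and e': "e' \<in> gadget_edges s" and "f e = f e'"
    then have "f e \<in> e" "f e \<in> e'" using hit(1) by metis+
    then show "e = e'" using matching_edges_eq[OF matching hit(2)[OF e] hit(2)[OF e']] by blast
  qed
  moreover have "f e \<in> {Uv s, Wv s} \<inter> \<Union>M" if "e \<in> gadget_edges s" for e
    using hit[OF that] unfolding f_def by auto
  then have "f ` gadget_edges s \<subseteq> {Uv s, Wv s} \<inter> \<Union>M" by blast
  ultimately show ?thesis by (rule card_inj_on_le) simp
qed

lemma gadget_edge_saturates_UW:
  assumes "gadget_edges s \<noteq> {}"
  obtains V where "V \<in> {Uv s, Wv s}" "V \<in> \<Union>M"
proof -
  obtain e where "e \<in> M" "e \<subseteq> gadget s" using assms unfolding gadget_edges_def by blast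
  then have "Uv s \<in> e \<or> Wv s \<in> e" using M_subset Gc_gadget_edge_hits_UW by blast
  then show thesis using that \<open>e \<in> M\<close> by blast
qed

lemma interface_unsaturated:
  assumes "{Uv s, Wv s} \<subseteq> \<Union>M" "s \<in> allsets t S" "a \<in> s"
  shows "Iv s a \<notin> \<Union>M"
proof
  assume "Iv s a \<in> \<Union>M"
  then show False
    using acyclic_matching_no_saturated_triangle[OF acyclic, of "Iv s a" "Uv s" "Wv s"]
      Gc_gadget_edges[OF assms(2,3)] assms(1) by (auto simp: insert_commute)
qed

lemma no_saturated_square:
  assumes "{Piv i, Iv s a} \<in> Gc_edges t S" "{Piv i, Iv s b} \<in> Gc_edges t S" "a \<noteq> b"
    and "V \<in> {Uv s, Wv s}" "{Piv i, Iv s a, Iv s b, V} \<subseteq> \<Union>M"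
  shows False
proof -
  have "s \<in> allsets t S" "a \<in> s" "b \<in> s"
    using assms(1,2) by (auto simp: Gc_selector_edge_iff)
  then show False
    using acyclic_matching_no_saturated_square[OF acyclic, of "Piv i" "Iv s a" V "Iv s b"]
      Gc_gadget_edges assms by (auto simp: insert_commute)
qed

lemma card_selector_edges: "card (selector_edges s) \<le> 1"
proof -
  have "e = f" if e: "e \<in> selector_edges s" and f: "f \<in> selector_edges s" for e f
  proof (rule ccontr)
    assume "e \<noteq> f"
    obtain i a where ia: "a \<in> s" "e = {Piv i, Iv s a}" "{Piv i, Iv s a} \<in> M"
      using e unfolding selector_edges_def by blast
    obtain j b where jb: "b \<in> s" "f = {Piv j, Iv s b}" "{Piv j, Iv s b} \<in> M"
      using f unfolding selector_edges_def by blast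
    have "i \<noteq> j"
    proof
      assume "i = j"
      then have "e = f" using matching_edges_eq[OF matching ia(3) jb(3), of "Piv i"] ia(2) jb(2) by simp
      with \<open>e \<noteq> f\<close> show False ..
    qed
    have i: "{Piv i, Iv s a} \<in> Gc_edges t S" and j: "{Piv j, Iv s b} \<in> Gc_edges t S"
      using ia(3) jb(3) M_subset by (blast, blast)
    \<comment> \<open>p_j is adjacent to the whole interface of s, since s \<notin> S j.\<close>
    then have "{Piv j, Iv s a} \<in> Gc_edges t S" using ia(1) by (simp add: Gc_selector_edge_iff)
    then have ja: "{Iv s a, Piv j} \<in> Gc_edges t S" by (simp add: insert_commute)
    have "Piv j \<in> p_clique t" "Piv i \<in> p_clique t" "Piv j \<noteq> Piv i"
      using i j \<open>i \<noteq> j\<close> by (simp_all add: Gc_selector_edge_iff p_clique_def)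
    then have ji: "{Piv j, Piv i} \<in> Gc_edges t S" by (rule Gc_p_clique[rule_format])
    have "{Piv i, Iv s a, Piv j} \<subseteq> \<Union>M" using ia(3) jb(3) by blast
    moreover have "distinct [Piv i, Iv s a, Piv j]" using \<open>i \<noteq> j\<close> by simp
    ultimately show False
      using acyclic_matching_no_saturated_triangle[OF acyclic _ i ja ji] by blast
  qed
  moreover have "finite (selector_edges s)"
    using finite_M unfolding selector_edges_def by simp
  ultimately show ?thesis by (auto simp: card_le_Suc0_iff_eq)
qed

lemma covered_empty_if_selected:
  assumes "gadget_edges s \<noteq> {}" "selector_edges s \<noteq> {}"
  shows "covered s = {}"
proof (rule ccontr)
  assume "covered s \<noteq> {}"
  then obtain b where b: "b \<in> s" "{Iv s b, Xv b} \<in> M" unfolding covered_def by auto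
  obtain i a where ia: "a \<in> s" "{Piv i, Iv s a} \<in> M"
    using assms(2) unfolding selector_edges_def by blast
  have "a \<noteq> b" using matching_edges_eq[OF matching b(2) ia(2), of "Iv s a"]
    by (auto simp: doubleton_eq_iff)
  have sel: "{Piv i, Iv s a} \<in> Gc_edges t S" using ia M_subset by auto
  then have "{Piv i, Iv s b} \<in> Gc_edges t S" using b by (simp add: Gc_selector_edge_iff)
  moreover obtain V where "V \<in> {Uv s, Wv s}" "V \<in> \<Union>M"
    using assms(1) by (rule gadget_edge_saturates_UW)
  ultimately show False using no_saturated_square[OF sel _ \<open>a \<noteq> b\<close>] ia b by blast
qed

lemma card_gadget_edges_le_2: "card (gadget_edges s) \<le> 2"
  using card_gadget_edges[of s] card_mono[of "{Uv s, Wv s}", OF _ Int_lower1, of "\<Union>M"]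
  by simp

lemma gadget_full_saturates_UW:
  assumes "card (gadget_edges s) = 2"
  shows "{Uv s, Wv s} \<subseteq> \<Union>M"
proof -
  have "card ({Uv s, Wv s} \<inter> \<Union>M) = card {Uv s, Wv s}"
    using assms card_gadget_edges[of s] card_mono[of "{Uv s, Wv s}", OF _ Int_lower1, of "\<Union>M"]
    by simp
  then have "{Uv s, Wv s} \<inter> \<Union>M = {Uv s, Wv s}" by (intro card_subset_eq) auto
  then show ?thesis by blast
qed

lemma interface_unmatched_if_gadget_full:
  assumes "s \<in> allsets t S" "card (gadget_edges s) = 2"
  shows "covered s = {}" "selector_edges s = {}"
proof -
  note unsat = interface_unsaturated[OF gadget_full_saturates_UW[OF assms(2)] assms(1)]
  have "a \<notin> covered s" for a
    using unsat[of a] unfolding covered_def by blast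
  then show "covered s = {}" by blast
  have "e \<notin> selector_edges s" for e
    using unsat unfolding selector_edges_def by blast
  then show "selector_edges s = {}" by blast
qed

lemma covered_subset_set: "covered s \<subseteq> s"
  unfolding covered_def by (rule Collect_restrict)

lemma card_covered_le_3:
  assumes "s \<in> allsets t S"
  shows "card (covered s) \<le> 3"
proof -
  have "finite s" by (rule card_ge_0_finite) (simp add: card_sets[OF assms])
  then show ?thesis using card_mono[OF _ covered_subset_set] card_sets[OF assms] by metis
qed

lemma weight_le_6:
  assumes s: "s \<in> allsets t S"
  shows "weight s \<le> 6"
proof (cases "card (gadget_edges s) = 2")
  case True
  then show ?thesis using interface_unmatched_if_gadget_full[OF s] by (simp add: weight_def)
next
  case False
  then have g: "card (gadget_edges s) \<le> 1" using card_gadget_edges_le_2[of s] by linarith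
  have x: "card (covered s) \<le> 3" by (rule card_covered_le_3[OF s])
  have y: "card (selector_edges s) \<le> 1" by (rule card_selector_edges)
  show ?thesis
  proof (cases "gadget_edges s = {} \<or> selector_edges s = {}")
    case True
    then show ?thesis using g x y unfolding weight_def by auto
  next
    case False
    then have "covered s = {}" using covered_empty_if_selected by blast
    then show ?thesis using g y unfolding weight_def by simp
  qed
qed

lemma covered_disjoint:
  assumes "s \<noteq> s'"
  shows "covered s \<inter> covered s' = {}"
proof -
  have "a \<notin> covered s'" if "a \<in> covered s" for a
  proof
    assume "a \<in> covered s'"
    then have "{Iv s a, Xv a} \<in> M" "{Iv s' a, Xv a} \<in> M"
      using that unfolding covered_def by auto
    then have "{Iv s a, Xv a} = {Iv s' a, Xv a}"
      by (rule matching_edges_eq[OF matching, where v="Xv a"]) simp_all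
    with assms show False by (simp add: doubleton_eq_iff)
  qed
  then show ?thesis by blast
qed

lemma covered_subset: "s \<in> allsets t S \<Longrightarrow> covered s \<subseteq> {1..n}"
  using covered_subset_set sets_subset by (rule order_trans)

lemma finite_covered: "s \<in> allsets t S \<Longrightarrow> finite (covered s)"
  by (rule finite_subset[OF covered_subset]) simp_all

lemma card_Union_covered:
  "card (\<Union>s\<in>allsets t S. covered s) = (\<Sum>s\<in>allsets t S. card (covered s))"
  by (rule card_UN_disjoint[OF finite_allsets]) (simp_all add: finite_covered covered_disjoint)

lemma Union_covered_subset: "(\<Union>s\<in>allsets t S. covered s) \<subseteq> {1..n}"
  using covered_subset by (rule UN_least)

definition gadget_incident_edges :: "nat set \<Rightarrow> vtx set set" where
  "gadget_incident_edges s =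
     gadget_edges s \<union> selector_edges s \<union> (\<lambda>a. {Iv s a, Xv a}) ` covered s"

lemma M_subset_incident_edges:
  "M \<subseteq> (\<Union>s\<in>allsets t S. gadget_incident_edges s) \<union> clique_edges"
proof
  fix e assume "e \<in> M"
  then have "e \<in> Gc_edges t S" using M_subset by blast
  then show "e \<in> (\<Union>s\<in>allsets t S. gadget_incident_edges s) \<union> clique_edges"
  proof (cases rule: Gc_edge_cases)
    case (1 s)
    then have "e \<in> gadget_incident_edges s"
      using \<open>e \<in> M\<close> by (simp add: gadget_incident_edges_def gadget_edges_def)
    then show ?thesis using 1(1) by blast
  next
    case (2 s a)
    then have "a \<in> covered s" using \<open>e \<in> M\<close> by (simp add: covered_def)
    then have "e \<in> gadget_incident_edges s" unfolding gadget_incident_edges_def using 2(3) by blast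
    then show ?thesis using 2(1) by blast
  next
    case (3 s i a)
    then have "e \<in> gadget_incident_edges s"
      using \<open>e \<in> M\<close> unfolding gadget_incident_edges_def selector_edges_def by blast
    then show ?thesis using 3(1) by blast
  next
    case 4
    then show ?thesis using \<open>e \<in> M\<close> by (simp add: clique_edges_def)
  qed
qed

lemma finite_gadget_incident_edges: "finite (gadget_incident_edges s)"
proof (rule finite_subset[OF _ finite_M])
  show "gadget_incident_edges s \<subseteq> M"
    unfolding gadget_incident_edges_def gadget_edges_def selector_edges_def covered_def by blast
qed

lemma card_gadget_incident_edges:
  assumes "s \<in> allsets t S"
  shows "card (gadget_incident_edges s)
    \<le> card (gadget_edges s) + card (selector_edges s) + card (covered s)"
proof -
  have "card ((\<lambda>a. {Iv s a, Xv a}) ` covered s) \<le> card (covered s)"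
    using assms by (intro card_image_le finite_covered)
  then show ?thesis
    using card_Un_le[of "gadget_edges s \<union> selector_edges s" "(\<lambda>a. {Iv s a, Xv a}) ` covered s"]
      card_Un_le[of "gadget_edges s" "selector_edges s"]
    unfolding gadget_incident_edges_def by linarith
qed

lemma card_M_le:
  "card M \<le> (\<Sum>s\<in>allsets t S. card (gadget_edges s) + card (selector_edges s) + card (covered s))
     + card clique_edges"
proof -
  have "finite ((\<Union>s\<in>allsets t S. gadget_incident_edges s) \<union> clique_edges)"
    using finite_allsets finite_gadget_incident_edges finite_M by (simp add: clique_edges_def)
  then have "card M \<le> card ((\<Union>s\<in>allsets t S. gadget_incident_edges s) \<union> clique_edges)"
    using M_subset_incident_edges by (rule card_mono)
  also have "\<dots> \<le> card (\<Union>s\<in>allsets t S. gadget_incident_edges s) + card clique_edges"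
    by (rule card_Un_le)
  also have "card (\<Union>s\<in>allsets t S. gadget_incident_edges s)
      \<le> (\<Sum>s\<in>allsets t S. card (gadget_incident_edges s))"
    using finite_allsets by (rule card_UN_le)
  also have "\<dots> \<le> (\<Sum>s\<in>allsets t S. card (gadget_edges s) + card (selector_edges s) + card (covered s))"
    using card_gadget_incident_edges by (rule sum_mono)
  finally show ?thesis by simp
qed

lemma card_clique_edges: "card clique_edges \<le> 1"
  unfolding clique_edges_def
  by (rule card_acyclic_matching_clique_edges[OF acyclic finite_M Gc_p_clique card_Gc_edge])

lemma clique_edgeE:
  assumes "clique_edges \<noteq> {}"
  obtains u v where "u \<noteq> v" "{u, v} \<subseteq> p_clique t" "{u, v} \<in> M"
proof -
  obtain e where e: "e \<in> M" "e \<subseteq> p_clique t"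
    using assms unfolding clique_edges_def by blast
  then have "card e = 2" using M_subset card_Gc_edge by blast
  then obtain u v where "e = {u, v}" "u \<noteq> v" by (meson card_2_iff)
  then show thesis using that e by blast
qed

lemma selector_edges_empty_if_clique:
  assumes "clique_edges \<noteq> {}"
  shows "selector_edges s = {}"
proof (rule ccontr)
  assume "selector_edges s \<noteq> {}"
  then obtain i a where ia: "a \<in> s" "{Piv i, Iv s a} \<in> M"
    unfolding selector_edges_def by blast
  then have "i \<in> {1..t}" using M_subset Gc_selector_edge_iff by blast
  then have p: "Piv i \<in> p_clique t" by (simp add: p_clique_def)
  obtain u v where uv: "u \<noteq> v" "{u, v} \<subseteq> p_clique t" "{u, v} \<in> M"
    using assms by (rule clique_edgeE)
  have "Piv i \<notin> {u, v}"
  proof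
    assume "Piv i \<in> {u, v}"
    then have "{u, v} = {Piv i, Iv s a}"
      using matching_edges_eq[OF matching uv(3) ia(2)] by simp
    then show False using uv(2) by (auto simp: p_clique_def)
  qed
  then have "distinct [u, v, Piv i]" "{u, v, Piv i} \<subseteq> p_clique t" "{u, v, Piv i} \<subseteq> \<Union>M"
    using uv p ia(2) by auto
  then show False by (rule acyclic_matching_clique_saturated[OF acyclic Gc_p_clique])
qed

lemma saturated_p_vertex:
  assumes "clique_edges \<noteq> {}"
  obtains q where "q \<in> {1..t}" "Piv q \<in> \<Union>M"
proof -
  obtain u v where uv: "u \<noteq> v" "{u, v} \<subseteq> p_clique t" "{u, v} \<in> M"
    using assms by (rule clique_edgeE)
  then obtain w where w: "w \<in> {u, v}" "w \<noteq> Pv" by blast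
  then obtain q where "q \<in> {1..t}" "w = Piv q" using uv(2) unfolding p_clique_def by blast
  then show thesis using that w(1) uv(3) by blast
qed

lemma tight_gadget:
  assumes s: "s \<in> allsets t S" and "selector_edges s = {}" "weight s = 6" "covered s \<noteq> {}"
  shows "covered s = s" "gadget_edges s \<noteq> {}"
proof -
  have w: "3 * card (gadget_edges s) + card (covered s) = 6"
    using assms(2,3) unfolding weight_def by simp
  have "card (covered s) \<noteq> 0" using assms(4) finite_covered[OF s] by simp
  then have "card (covered s) = 3" "card (gadget_edges s) = 1"
    using w card_covered_le_3[OF s] by presburger+
  moreover have "finite s" by (rule card_ge_0_finite) (simp add: card_sets[OF s])
  ultimately show "covered s = s"
    using card_subset_eq[OF _ covered_subset_set] card_sets[OF s] by metis
  show "gadget_edges s \<noteq> {}" using \<open>card (gadget_edges s) = 1\<close> by auto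
qed

lemma fully_covered_in_S:
  assumes q: "q \<in> {1..t}" "Piv q \<in> \<Union>M"
    and s: "s \<in> allsets t S" "covered s = s" "gadget_edges s \<noteq> {}"
  shows "s \<in> S q"
proof (rule ccontr)
  assume "s \<notin> S q"
  obtain a b where ab: "a \<in> s" "b \<in> s" "a \<noteq> b"
    using card_sets[OF s(1)] by (metis card_3_iff insertI1 insert_commute)
  then have "{Piv q, Iv s a} \<in> Gc_edges t S" "{Piv q, Iv s b} \<in> Gc_edges t S"
    using q(1) s(1) \<open>s \<notin> S q\<close> by (simp_all add: Gc_selector_edge_iff)
  moreover have "Iv s a \<in> \<Union>M" "Iv s b \<in> \<Union>M"
    using ab s(2) unfolding covered_def by blast+
  moreover obtain V where "V \<in> {Uv s, Wv s}" "V \<in> \<Union>M"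
    using s(3) by (rule gadget_edge_saturates_UW)
  ultimately show False using no_saturated_square ab(3) q(2) by blast
qed

lemma exact_cover_if_tight:
  assumes q: "q \<in> {1..t}" "Piv q \<in> \<Union>M"
    and no_selector: "\<And>s. selector_edges s = {}"
    and tight: "\<And>s. s \<in> allsets t S \<Longrightarrow> weight s = 6"
    and all_covered: "(\<Sum>s\<in>allsets t S. card (covered s)) = n"
  shows "exact_cover_yes {1..n} (S q)"
proof -
  define T where "T = {s \<in> allsets t S. covered s = s}"
  have "T \<subseteq> S q"
  proof
    fix s assume "s \<in> T"
    then have s: "s \<in> allsets t S" "covered s = s" unfolding T_def by auto
    have "s \<noteq> {}" using card_sets[OF s(1)] by auto
    then have "gadget_edges s \<noteq> {}"
      using tight_gadget(2)[OF s(1) no_selector tight[OF s(1)]] s(2) by simp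
    then show "s \<in> S q" by (rule fully_covered_in_S[OF q s])
  qed
  have "card (\<Union>s\<in>allsets t S. covered s) = card {1..n}"
    using card_Union_covered all_covered by simp
  then have onto: "(\<Union>s\<in>allsets t S. covered s) = {1..n}"
    using card_subset_eq[OF _ Union_covered_subset] by simp
  show ?thesis unfolding exact_cover_yes_def
  proof (intro exI[of _ T] conjI \<open>T \<subseteq> S q\<close> ballI)
    fix a assume "a \<in> {1..n}"
    then obtain s where s: "s \<in> allsets t S" "a \<in> covered s" using onto by blast
    then have "s \<in> T" using tight_gadget(1)[OF s(1) no_selector tight] unfolding T_def by auto
    show "\<exists>!s. s \<in> T \<and> a \<in> s"
    proof (rule ex1I[of _ s])
      show "s \<in> T \<and> a \<in> s" using \<open>s \<in> T\<close> s(2) covered_subset_set by blast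
    next
      fix s' assume "s' \<in> T \<and> a \<in> s'"
      then have "a \<in> covered s'" unfolding T_def by simp
      then show "s' = s" using covered_disjoint s(2) by blast
    qed
  qed
qed

lemma exact_cover_if_large:
  assumes large: "6 * card (allsets t S) + 2 * n + 3 \<le> 3 * card M"
  shows "\<exists>q\<in>{1..t}. exact_cover_yes {1..n} (S q)"
proof -
  let ?C = "allsets t S"
  have "3 * card M \<le>
      3 * (\<Sum>s\<in>?C. card (gadget_edges s) + card (selector_edges s) + card (covered s))
      + 3 * card clique_edges"
    using card_M_le by simp
  also have "3 * (\<Sum>s\<in>?C. card (gadget_edges s) + card (selector_edges s) + card (covered s))
      = (\<Sum>s\<in>?C. weight s + 2 * card (covered s))"
    unfolding sum_distrib_left by (rule sum.cong) (simp_all add: weight_def)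
  also have "\<dots> = (\<Sum>s\<in>?C. weight s) + 2 * (\<Sum>s\<in>?C. card (covered s))"
    by (simp add: sum.distrib sum_distrib_left)
  finally have upper: "3 * card M \<le> (\<Sum>s\<in>?C. weight s) + 2 * (\<Sum>s\<in>?C. card (covered s))
      + 3 * card clique_edges" .
  have weights: "(\<Sum>s\<in>?C. weight s) \<le> 6 * card ?C"
    using sum_bounded_above[of ?C weight 6] weight_le_6 by (simp add: mult.commute)
  have "(\<Sum>s\<in>?C. card (covered s)) \<le> card {1..n}"
    unfolding card_Union_covered[symmetric] by (rule card_mono[OF _ Union_covered_subset]) simp
  then have weights_eq: "(\<Sum>s\<in>?C. weight s) = 6 * card ?C"
    and covered_eq: "(\<Sum>s\<in>?C. card (covered s)) = n"
    and "card clique_edges = 1"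
    using large upper weights card_clique_edges by simp_all
  have tight: "weight s = 6" if "s \<in> ?C" for s
    using sum_mono_inv[of weight ?C "\<lambda>_. 6", OF _ weight_le_6 that finite_allsets] weights_eq
    by (simp add: mult.commute)
  have "clique_edges \<noteq> {}" using \<open>card clique_edges = 1\<close> by auto
  then obtain q where q: "q \<in> {1..t}" "Piv q \<in> \<Union>M" by (rule saturated_p_vertex)
  have "exact_cover_yes {1..n} (S q)"
    using q selector_edges_empty_if_clique[OF \<open>clique_edges \<noteq> {}\<close>] tight covered_eq
    by (rule exact_cover_if_tight)
  then show ?thesis using \<open>q \<in> {1..t}\<close> by blast
qed

end

theorem lemma18:
  fixes c t :: nat and S :: "nat \<Rightarrow> nat set set" and M :: "vtx set set"
  assumes "n = 3 * c"
    and "\<forall>i\<in>{1..t}. \<forall>s\<in>S i. s \<subseteq> {1..n} \<and> card s = 3"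
    and "\<forall>i\<in>{1..t}. \<forall>j\<in>{1..t}. card (S i) = card (S j)"
    and "\<forall>i\<in>{1..t}. \<forall>j\<in>{1..t}. i \<noteq> j \<longrightarrow> S i \<noteq> S j"
    and "acyclic_matching (Gc_edges t S) M"
    and "card M \<ge> 2 * card (allsets t S) + 2 * n div 3 + 1"
  shows "\<exists>q\<in>{1..t}. exact_cover_yes {1..n} (S q)"
proof -
  have "finite M" using assms(6) card.infinite by force
  interpret Gc_acyclic_matching n t S M
  proof
    fix s assume "s \<in> allsets t S"
    then show "s \<subseteq> {1..n}" "card s = 3" using assms(2) unfolding allsets_def by blast+
  qed (fact assms(5), fact \<open>finite M\<close>)
  have "2 * n div 3 = 2 * c" using assms(1) by simp
  then have "6 * card (allsets t S) + 2 * n + 3 \<le> 3 * card M" using assms(1,6) by linarith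
  then show ?thesis by (rule exact_cover_if_large)
qed

end
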